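(* Let $\mathcal{T}_0$ be a triangulation of a finite point set $\mathcal{P}$ in the plane and let $F=\langle f_1,\ldots,f_r\rangle$ be a valid sequence of flips with $\mathcal{T}_0 \xrightarrow{F} \mathcal{T}_r$. Let $\pi(F)$ be a permutation of the flips in $F$ that is a topological sorting of the DAG $\mathcal{D}_F$. Then $\pi(F)$ is a valid sequence of flips with respect to $\mathcal{T}_0$ and $\mathcal{T}_0 \xrightarrow{\pi(F)} \mathcal{T}_r$.
   Context: A triangulation of a finite point set $\mathcal{P}$ in the plane is a partition of the convex hull of $\mathcal{P}$ into triangles whose vertex set is $\mathcal{P}$. For an interior edge $e$ of a triangulation $\mathcal{T}$, the quadrilateral associated with $e$ is the union of the two triangles of $\mathcal{T}$ sharing $e$. A flip $f$ with underlying edge $\epsilon(f)=e$ is admissible in $\mathcal{T}$ if $e\in\mathcal{T}$ and its associated quadrilateral is convex; performing it replaces $e$ by the other diagonal $\phi(f)$ of that quadrilateral. Two distinct edges share a triangle in $\mathcal{T}$ if they are edges of the same triangle of $\mathcal{T}$. A sequence $F=\langle f_1,\ldots,f_r\rangle$ is valid with respect to $\mathcal{T}$ if there are triangulations $\mathcal{T}_0=\mathcal{T},\mathcal{T}_1,\ldots,\mathcal{T}_r$ such that $f_i$ is admissible in $\mathcal{T}_{i-1}$ and performing it yields $\mathcal{T}_i$; then we write $\mathcal{T}\xrightarrow{F}\mathcal{T}_r$. Flips in a sequence are distinct objects even if they have the same underlying edge. For $1\le i<j\le r$, flip $f_j$ is adjacent to $f_i$ (written $f_i\to f_j$) if (1)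 either $\phi(f_i)=\epsilon(f_j)$ or $\phi(f_i)$ and $\epsilon(f_j)$ share a triangle in $\mathcal{T}_{j-1}$, and (2) there is no $p$ with $i<p<j$ and $\epsilon(f_p)=\phi(f_i)$. $\mathcal{D}_F$ is the directed acyclic graph whose nodes are the flips of $F$ and whose arcs are the pairs $f_i\to f_j$. *)

theory Defs
  imports "HOL-Analysis.Analysis"
begin

type_synonym pt = "real \<times> real"

definition is_triangulation :: "pt set \<Rightarrow> pt set set \<Rightarrow> bool" where
  "is_triangulation P T \<longleftrightarrow>
     finite P \<and>
     (\<forall>t\<in>T. t \<subseteq> P \<and> card t = 3 \<and> \<not> affine_dependent t) \<and>
     (\<Union>t\<in>T. convex hull t) = convex hull P \<and>
     (\<forall>t\<in>T. \<forall>t'\<in>T. convex hull t \<inter> convex hull t' = convex hull (t \<inter> t')) \<and>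
     \<Union>T = P"

definition convex_quad :: "pt \<Rightarrow> pt \<Rightarrow> pt \<Rightarrow> pt \<Rightarrow> bool" where
  "convex_quad a b c d \<longleftrightarrow>
     convex (convex hull {a, b, c} \<union> convex hull {a, b, d}) \<and>
     (\<forall>x\<in>{a, b, c, d}. x \<notin> convex hull ({a, b, c, d} - {x}))"

definition flip_step :: "pt set set \<Rightarrow> pt set \<Rightarrow> pt set set \<Rightarrow> bool" where
  "flip_step T e T' \<longleftrightarrow>
     (\<exists>a b c d. e = {a, b} \<and> a \<noteq> b \<and> c \<noteq> d \<and>
        {a, b, c} \<in> T \<and> {a, b, d} \<in> T \<and> convex_quad a b c d \<and>
        T' = (T - {{a, b, c}, {a, b, d}}) \<union> {{a, c, d}, {b, c, d}})"

definition new_diag :: "pt set set \<Rightarrow> pt set \<Rightarrow> pt set" where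
  "new_diag T e = (THE g. \<exists>a b c d. e = {a, b} \<and> a \<noteq> b \<and> c \<noteq> d \<and>
        {a, b, c} \<in> T \<and> {a, b, d} \<in> T \<and> g = {c, d})"

text \<open>A flip sequence F (list of underlying edges) is valid w.r.t. T0 with intermediate
  triangulations Ts = [T_0, ..., T_r] (0-based: flip F!i is performed in Ts!i).\<close>
definition flip_run :: "pt set \<Rightarrow> pt set set \<Rightarrow> pt set list \<Rightarrow> pt set set list \<Rightarrow> bool" where
  "flip_run P T0 F Ts \<longleftrightarrow>
     length Ts = length F + 1 \<and> Ts ! 0 = T0 \<and>
     (\<forall>i < length Ts. is_triangulation P (Ts ! i)) \<and>
     (\<forall>i < length F. flip_step (Ts ! i) (F ! i) (Ts ! (i + 1)))"

definition share_triangle :: "pt set set \<Rightarrow> pt set \<Rightarrow> pt set \<Rightarrow> bool" where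
  "share_triangle T e g \<longleftrightarrow> e \<noteq> g \<and> (\<exists>t\<in>T. e \<subseteq> t \<and> g \<subseteq> t)"

definition dag_arc :: "pt set list \<Rightarrow> pt set set list \<Rightarrow> nat \<Rightarrow> nat \<Rightarrow> bool" where
  "dag_arc F Ts i j \<longleftrightarrow>
     i < j \<and> j < length F \<and>
     (new_diag (Ts ! i) (F ! i) = F ! j \<or>
      share_triangle (Ts ! j) (new_diag (Ts ! i) (F ! i)) (F ! j)) \<and>
     \<not> (\<exists>p. i < p \<and> p < j \<and> F ! p = new_diag (Ts ! i) (F ! i))"

end

theory Submission
  imports Defs
begin

text \<open>Record for every triangle the flip that created it (or the initial
  triangulation) and the first later flip that removes it; a flip depends on an earlier one if
  it removes a triangle created by it. Such a dependency is an arc of \<open>D_F\<close>: the removed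
  triangle contains both the new diagonal and the edge of the later flip, and it survives in
  between, so the diagonal is not flipped meanwhile. For a set \<open>S\<close> of flips closed under
  dependencies, the live triangles (initial or created by \<open>S\<close>, and not removed by \<open>S\<close>)
  form a triangulation, and a flip outside \<open>S\<close> whose dependencies lie in \<open>S\<close> finds there
  exactly the convex quadrilateral it had in the original run. Hence replaying \<open>F\<close> in a
  topological order never gets stuck, and it ends in the live triangles of all flips, which
  are those of \<open>T_r\<close>. The geometric input is that an edge of a triangulation lies in at most
  two triangles and that flipping a convex quadrilateral preserves being a triangulation.\<close>

section \<open>Orientation in the plane\<close>

text \<open>\<open>cross (b - a) (c - a)\<close> is twice the signed area of \<open>abc\<close>; its sign tells on which
  side of the line \<open>ab\<close> the point \<open>c\<close> lies.\<close>
definition cross :: "pt \<Rightarrow> pt \<Rightarrow> real" where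
  "cross u v = fst u * snd v - snd u * fst v"

lemma collinear_if_cross_eq_0:
  assumes "cross (b - a) (c - a) = 0"
  shows "collinear {a, b, c}"
proof (cases "a = b")
  case True
  then show ?thesis by (simp add: collinear_2)
next
  case False
  define u where "u = b - a"
  have u0: "u \<noteq> 0" using False u_def by auto
  define l where "l = (if fst u \<noteq> 0 then fst (c - a) / fst u else snd (c - a) / snd u)"
  obtain u1 u2 where uu: "u = (u1, u2)" by (cases u)
  obtain w1 w2 where ww: "c - a = (w1, w2)" by (cases "c - a")
  have cz: "u1 * w2 - u2 * w1 = 0"
    using assms unfolding cross_def u_def[symmetric] uu ww by simp
  have "c - a = l *\<^sub>R u"
  proof (cases "u1 = 0")
    case True
    then have "u2 \<noteq> 0" using u0 uu by (auto simp: zero_prod_def)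
    then have "w1 = 0" using cz True by simp
    then show ?thesis using True \<open>u2 \<noteq> 0\<close> unfolding l_def uu ww by simp
  next
    case False
    then have "w2 = u2 * w1 / u1" using cz by (simp add: field_simps)
    then show ?thesis using False unfolding l_def uu ww by (simp add: field_simps)
  qed
  then have "collinear {0, b - a, c - a}" using collinear_lemma u_def by blast
  then have "collinear {b, a, c}" by (subst collinear_3) auto
  then show ?thesis by (simp add: insert_commute)
qed

lemma cross_closed_segment_eq_0:
  assumes "p \<in> closed_segment a b"
  shows "cross (b - a) (p - a) = 0"
proof -
  obtain u where p: "p = (1 - u) *\<^sub>R a + u *\<^sub>R b" using assms unfolding in_segment by blast
  show ?thesis unfolding p cross_def by (simp add: algebra_simps)
qed

lemma card_3_distinct:
  assumes "card {a, b, c} = 3"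
  shows "a \<noteq> b" "a \<noteq> c" "b \<noteq> c"
  using assms by (auto simp: card_insert_if split: if_splits)

lemma card_3_obtain_third:
  assumes "card t = 3" "a \<in> t" "b \<in> t" "a \<noteq> b"
  obtains e where "t = {a, b, e}" "e \<noteq> a" "e \<noteq> b"
proof -
  have "finite t" using assms(1) card_gt_0_iff by fastforce
  then have "card (t - {a, b}) = 1" using assms by (simp add: card_Diff_subset)
  then obtain e where e: "t - {a, b} = {e}" by (meson card_1_singletonE)
  then have "t = {a, b, e}" using assms by blast
  then show thesis using that e by blast
qed

lemma cross_ne_0_if_triangle:
  assumes "card {a, b, c} = 3" "\<not> affine_dependent {a, b, c}"
  shows "cross (b - a) (c - a) \<noteq> 0"
  using assms card_3_distinct[OF assms(1)] collinear_if_cross_eq_0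
    collinear_3_eq_affine_dependent
  by blast

text \<open>Cramer's rule.\<close>
lemma barycentric_by_cross:
  fixes a b c d :: pt
  assumes "cross (b - a) (c - a) \<noteq> 0"
  defines "\<beta> \<equiv> cross (d - a) (c - a) / cross (b - a) (c - a)"
      and "\<gamma> \<equiv> cross (b - a) (d - a) / cross (b - a) (c - a)"
  shows "d = (1 - \<beta> - \<gamma>) *\<^sub>R a + \<beta> *\<^sub>R b + \<gamma> *\<^sub>R c"
proof -
  obtain a1 a2 where a: "a = (a1, a2)" by (cases a)
  obtain b1 b2 where b: "b = (b1, b2)" by (cases b)
  obtain c1 c2 where c: "c = (c1, c2)" by (cases c)
  obtain d1 d2 where d: "d = (d1, d2)" by (cases d)
  define s where "s = (b1 - a1) * (c2 - a2) - (b2 - a2) * (c1 - a1)"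
  define X where "X = (d1 - a1) * (c2 - a2) - (d2 - a2) * (c1 - a1)"
  define Y where "Y = (b1 - a1) * (d2 - a2) - (b2 - a2) * (d1 - a1)"
  have s0: "s \<noteq> 0" using assms(1) unfolding s_def cross_def a b c by simp
  have \<beta>: "\<beta> = X / s" and \<gamma>: "\<gamma> = Y / s"
    unfolding \<beta>_def \<gamma>_def X_def Y_def s_def cross_def a b c d by simp_all
  have "X * (b1 - a1) + Y * (c1 - a1) = (d1 - a1) * s"
    and "X * (b2 - a2) + Y * (c2 - a2) = (d2 - a2) * s"
    unfolding X_def Y_def s_def by algebra+
  moreover have "(1 - \<beta> - \<gamma>) * a1 + \<beta> * b1 + \<gamma> * c1 = a1 + (X * (b1 - a1) + Y * (c1 - a1)) / s"
    and "(1 - \<beta> - \<gamma>) * a2 + \<beta> * b2 + \<gamma> * c2 = a2 + (X * (b2 - a2) + Y * (c2 - a2)) / s"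
    unfolding \<beta> \<gamma> by (simp_all add: diff_divide_distrib add_divide_distrib algebra_simps)
  ultimately have "d1 = (1 - \<beta> - \<gamma>) * a1 + \<beta> * b1 + \<gamma> * c1"
    and "d2 = (1 - \<beta> - \<gamma>) * a2 + \<beta> * b2 + \<gamma> * c2"
    using s0 by simp_all
  then show ?thesis unfolding a b c d by simp
qed

lemma hull_triangle_cross_side:
  assumes "x \<in> convex hull {a, c, d}"
  obtains \<alpha> where "0 \<le> \<alpha>" "cross (d - c) (x - c) = \<alpha> * cross (d - c) (a - c)"
    "\<alpha> = 0 \<Longrightarrow> x \<in> closed_segment c d"
proof -
  obtain u v w where uvw: "0 \<le> u" "0 \<le> v" "0 \<le> w" "u + v + w = 1"
    and x: "x = u *\<^sub>R a + v *\<^sub>R c + w *\<^sub>R d"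
    using assms unfolding convex_hull_3 by blast
  have v: "v = 1 - u - w" using uvw by simp
  have xc: "x - c = u *\<^sub>R (a - c) + w *\<^sub>R (d - c)" unfolding x v by (simp add: algebra_simps)
  have "cross (d - c) (x - c) = u * cross (d - c) (a - c)"
    unfolding xc by (simp add: cross_def algebra_simps)
  moreover have "x \<in> closed_segment c d" if "u = 0"
    using that x v uvw unfolding in_segment by (intro exI[of _ w]) auto
  ultimately show thesis using that uvw by blast
qed

lemma nonneg_multiples_of_opposite_signs_eq:
  fixes \<alpha> \<beta> x y :: real
  assumes "x * y < 0" "0 \<le> \<alpha>" "0 \<le> \<beta>" "\<alpha> * x = \<beta> * y"
  shows "\<alpha> = 0"
proof -
  have "\<alpha> * (x * x) = \<beta> * (x * y)" using assms(4) by (metis mult.assoc mult.commute)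
  moreover have "\<beta> * (x * y) \<le> 0" using assms(1,3) by (simp add: mult_nonneg_nonpos)
  moreover have "x * x > 0" using assms(1) by (metis mult_eq_0_iff not_real_square_gt_zero order_less_irrefl)
  ultimately show ?thesis using assms(2) by (metis mult_le_0_iff not_le order_antisym)
qed

lemma hull_edge_Int_opposite_triangle:
  assumes opp: "cross (d - c) (a - c) * cross (d - c) (b - c) < 0"
    and x_bc: "x \<in> convex hull {b, c}" and x_acd: "x \<in> convex hull {a, c, d}"
  shows "x = c"
proof -
  obtain \<alpha> where \<alpha>: "0 \<le> \<alpha>" "cross (d - c) (x - c) = \<alpha> * cross (d - c) (a - c)"
    using hull_triangle_cross_side[OF x_acd] by blast
  obtain \<mu> where \<mu>: "0 \<le> \<mu>" "\<mu> \<le> 1" "x = (1 - \<mu>) *\<^sub>R b + \<mu> *\<^sub>R c"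
    using x_bc unfolding segment_convex_hull[symmetric] in_segment by blast
  have xc: "x - c = (1 - \<mu>) *\<^sub>R (b - c)" unfolding \<mu>(3) by (simp add: algebra_simps)
  have "cross (d - c) (x - c) = (1 - \<mu>) * cross (d - c) (b - c)"
    unfolding xc by (simp add: cross_def algebra_simps)
  moreover have "cross (d - c) (b - c) * cross (d - c) (a - c) < 0" using opp by (simp add: mult.commute)
  ultimately have "1 - \<mu> = 0"
    using nonneg_multiples_of_opposite_signs_eq[of _ _ "1 - \<mu>" \<alpha>] \<alpha> \<mu>(2) by simp
  then show ?thesis using \<mu> by simp
qed

lemma convex_hull_subset_if_insert_mem_hull:
  assumes "p \<in> convex hull K" "S \<subseteq> insert p K"
  shows "convex hull S \<subseteq> convex hull K"
  using assms by (intro hull_minimal) (auto intro: hull_inc)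

lemma hull_triangle_subset_if_diagonals_meet:
  fixes a b c d :: pt
  assumes p_ab: "p \<in> convex hull {a, b}" and p_cd: "p \<in> convex hull {c, d}"
  shows "convex hull {a, b, c} \<subseteq> convex hull {a, c, d} \<union> convex hull {b, c, d}"
proof -
  have pA: "p \<in> convex hull {a, c, d}" and pB: "p \<in> convex hull {b, c, d}"
    using p_cd hull_mono[of "{c, d}" "{a, c, d}"] hull_mono[of "{c, d}" "{b, c, d}"] by auto
  have sub: "convex hull S \<subseteq> convex hull {a, c, d} \<union> convex hull {b, c, d}"
    if "S \<subseteq> insert p {a, c, d} \<or> S \<subseteq> insert p {b, c, d}" for S
    using that convex_hull_subset_if_insert_mem_hull[OF pA, of S]
      convex_hull_subset_if_insert_mem_hull[OF pB, of S] by blast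
  have ab: "convex hull {a, b} \<subseteq> convex hull {a, c, d} \<union> convex hull {b, c, d}"
  proof -
    have "convex hull {a, b} = (\<Union>y\<in>{a, b}. convex hull (insert p ({a, b} - {y})))"
      by (rule convex_hull_exchange_Union[OF p_ab])
    also have "\<dots> \<subseteq> convex hull {a, c, d} \<union> convex hull {b, c, d}"
      by (rule UN_least, rule sub) auto
    finally show ?thesis .
  qed
  have "p \<in> convex hull {a, b, c}" using p_ab hull_mono[of "{a, b}" "{a, b, c}"] by auto
  then have "convex hull {a, b, c} = (\<Union>y\<in>{a, b, c}. convex hull (insert p ({a, b, c} - {y})))"
    by (rule convex_hull_exchange_Union)
  also have "\<dots> \<subseteq> convex hull {a, c, d} \<union> convex hull {b, c, d}"
  proof (rule UN_least)
    fix y assume y: "y \<in> {a, b, c}"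
    show "convex hull (insert p ({a, b, c} - {y})) \<subseteq> convex hull {a, c, d} \<union> convex hull {b, c, d}"
    proof (cases "y = c")
      case True
      then have "convex hull (insert p ({a, b, c} - {y})) \<subseteq> convex hull {a, b}"
        by (intro convex_hull_subset_if_insert_mem_hull[OF p_ab]) auto
      then show ?thesis using ab by blast
    next
      case False
      then show ?thesis using y by (intro sub) auto
    qed
  qed
  finally show ?thesis .
qed

lemma convex_hull_Int_subset: "convex hull (s \<inter> t) \<subseteq> convex hull s \<inter> convex hull t"
  by (simp add: hull_mono)

lemma triangulation_triangle:
  assumes "is_triangulation P T" "t \<in> T"
  shows "t \<subseteq> P" "card t = 3" "\<not> affine_dependent t"
  using assms unfolding is_triangulation_def by auto

lemma triangulation_finite: "is_triangulation P T \<Longrightarrow> finite P"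
  unfolding is_triangulation_def by simp

lemma triangulation_hull_Union: "is_triangulation P T \<Longrightarrow> (\<Union>t\<in>T. convex hull t) = convex hull P"
  unfolding is_triangulation_def by simp

lemma triangulation_Union: "is_triangulation P T \<Longrightarrow> \<Union>T = P"
  unfolding is_triangulation_def by simp

lemma triangulation_hull_Int:
  assumes "is_triangulation P T" "t \<in> T" "t' \<in> T"
  shows "convex hull t \<inter> convex hull t' = convex hull (t \<inter> t')"
  using assms unfolding is_triangulation_def by auto

lemma half_complement_add_mult_nonneg:
  fixes t x :: real
  assumes "0 < t" "t * (1 + 2 * \<bar>x\<bar>) \<le> 1"
  shows "0 \<le> (1 - t) / 2 + t * x"
proof -
  have "- (t * x) \<le> t * \<bar>x\<bar>" using mult_left_mono[of "- x" "\<bar>x\<bar>" t] assms(1) by simp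
  moreover have "t * (1 + 2 * \<bar>x\<bar>) = t + 2 * (t * \<bar>x\<bar>)" by (simp add: algebra_simps)
  ultimately show ?thesis using assms(2) by (simp add: field_simps)
qed

text \<open>A point of \<open>abd\<close> close enough to the midpoint of \<open>ab\<close> also lies in \<open>abc\<close>.\<close>
lemma same_side_triangles_overlap:
  assumes same_side: "cross (b - a) (c - a) * cross (b - a) (d - a) > 0"
  obtains q where "q \<in> convex hull {a, b, c}" "q \<in> convex hull {a, b, d}" "cross (b - a) (q - a) \<noteq> 0"
proof -
  define sc where "sc = cross (b - a) (c - a)"
  define sd where "sd = cross (b - a) (d - a)"
  have sc0: "sc \<noteq> 0" and sd0: "sd \<noteq> 0" using same_side unfolding sc_def sd_def by auto
  define \<beta> where "\<beta> = cross (d - a) (c - a) / sc"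
  define \<gamma> where "\<gamma> = sd / sc"
  define \<alpha> where "\<alpha> = 1 - \<beta> - \<gamma>"
  have d_eq: "d = \<alpha> *\<^sub>R a + \<beta> *\<^sub>R b + \<gamma> *\<^sub>R c"
    using barycentric_by_cross[of b a c d] sc0 unfolding \<alpha>_def \<beta>_def \<gamma>_def sc_def sd_def by simp
  have \<gamma>0: "\<gamma> > 0"
    using same_side unfolding \<gamma>_def sc_def sd_def by (auto simp: zero_less_mult_iff zero_less_divide_iff)
  define t where "t = 1 / (2 + 2 * \<bar>\<alpha>\<bar> + 2 * \<bar>\<beta>\<bar>)"
  have t0: "t > 0" and t1: "t \<le> 1" unfolding t_def by (simp_all add: add_pos_nonneg field_simps)
  have t_bound: "t * (1 + 2 * \<bar>\<alpha>\<bar>) \<le> 1" "t * (1 + 2 * \<bar>\<beta>\<bar>) \<le> 1"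
    unfolding t_def by (simp_all add: field_simps)
  define q where "q = ((1 - t) / 2) *\<^sub>R a + ((1 - t) / 2) *\<^sub>R b + t *\<^sub>R d"
  have "q \<in> convex hull {a, b, d}"
    unfolding convex_hull_3 q_def using t0 t1
    by (intro CollectI exI[of _ "(1 - t) / 2"] exI[of _ "(1 - t) / 2"] exI[of _ t]) simp
  moreover have "q \<in> convex hull {a, b, c}"
  proof -
    have "q = ((1 - t) / 2 + t * \<alpha>) *\<^sub>R a + ((1 - t) / 2 + t * \<beta>) *\<^sub>R b + (t * \<gamma>) *\<^sub>R c"
      unfolding q_def d_eq by (simp add: algebra_simps)
    moreover have "((1 - t) / 2 + t * \<alpha>) + ((1 - t) / 2 + t * \<beta>) + t * \<gamma> = 1"
      unfolding \<alpha>_def by (simp add: algebra_simps)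
    ultimately show ?thesis
      unfolding convex_hull_3 using half_complement_add_mult_nonneg[OF t0 t_bound(1)]
        half_complement_add_mult_nonneg[OF t0 t_bound(2)] t0 \<gamma>0
      by (intro CollectI exI[of _ "(1 - t) / 2 + t * \<alpha>"] exI[of _ "(1 - t) / 2 + t * \<beta>"]
          exI[of _ "t * \<gamma>"]) simp
  qed
  moreover have "t *\<^sub>R a + (((1 - t) / 2) *\<^sub>R a + ((1 - t) / 2) *\<^sub>R a) = a"
    by (simp only: scaleR_add_left[symmetric]) simp
  then have qa: "q - a = ((1 - t) / 2) *\<^sub>R (b - a) + t *\<^sub>R (d - a)"
    unfolding q_def by (simp add: algebra_simps)
  have "cross (b - a) (q - a) = t * sd"
    unfolding qa sd_def by (simp add: cross_def field_simps)
  then have "cross (b - a) (q - a) \<noteq> 0" using t0 sd0 by simp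
  ultimately show thesis using that by blast
qed

lemma triangles_on_edge_opposite_sides:
  assumes T: "is_triangulation P T" and abc: "{a, b, c} \<in> T" and abd: "{a, b, d} \<in> T"
    and cd: "c \<noteq> d"
  shows "cross (b - a) (c - a) * cross (b - a) (d - a) < 0"
proof -
  have "cross (b - a) (c - a) * cross (b - a) (d - a) \<noteq> 0"
    using triangulation_triangle[OF T abc] triangulation_triangle[OF T abd]
    by (simp add: cross_ne_0_if_triangle)
  moreover have "\<not> cross (b - a) (c - a) * cross (b - a) (d - a) > 0"
  proof
    assume "cross (b - a) (c - a) * cross (b - a) (d - a) > 0"
    then obtain q where q: "q \<in> convex hull {a, b, c}" "q \<in> convex hull {a, b, d}"
      "cross (b - a) (q - a) \<noteq> 0"
      by (rule same_side_triangles_overlap)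
    have "a \<noteq> c" "b \<noteq> c" "a \<noteq> d" "b \<noteq> d"
      using card_3_distinct[OF triangulation_triangle(2)[OF T abc]]
        card_3_distinct[OF triangulation_triangle(2)[OF T abd]] by simp_all
    then have "{a, b, c} \<inter> {a, b, d} = {a, b}" using cd by auto
    then have "convex hull {a, b, c} \<inter> convex hull {a, b, d} = closed_segment a b"
      using triangulation_hull_Int[OF T abc abd] by (simp add: segment_convex_hull)
    then show False using q cross_closed_segment_eq_0 by blast
  qed
  ultimately show ?thesis by linarith
qed

lemma third_triangle_on_edge:
  assumes T: "is_triangulation P T" and "{a, b, c} \<in> T" "{a, b, d} \<in> T" "c \<noteq> d"
    and "{a, b, x} \<in> T"
  shows "x = c \<or> x = d"
proof (rule ccontr)
  assume "\<not> (x = c \<or> x = d)"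
  then have "cross (b - a) (c - a) * cross (b - a) (d - a) < 0"
    "cross (b - a) (c - a) * cross (b - a) (x - a) < 0"
    "cross (b - a) (d - a) * cross (b - a) (x - a) < 0"
    using triangles_on_edge_opposite_sides[OF T assms(2,3,4)]
      triangles_on_edge_opposite_sides[OF T assms(2,5)]
      triangles_on_edge_opposite_sides[OF T assms(3,5)] by auto
  then show False by (auto simp: mult_less_0_iff)
qed

lemma convex_quad_swap_edge: "convex_quad a b c d \<Longrightarrow> convex_quad b a c d"
  unfolding convex_quad_def by (simp add: insert_commute)

lemma convex_quad_swap_diagonal: "convex_quad a b c d \<Longrightarrow> convex_quad a b d c"
  unfolding convex_quad_def by (simp add: insert_commute Un_commute)

lemma convex_quad_notin_hull:
  assumes "convex_quad a b c d" "x \<in> {a, b, c, d}" "S \<subseteq> {a, b, c, d} - {x}"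
  shows "x \<notin> convex hull S"
  using assms hull_mono unfolding convex_quad_def by blast

section \<open>Flipping a convex quadrilateral\<close>

locale convex_flip =
  fixes P :: "pt set" and T :: "pt set set" and a b c d :: pt
  assumes triangulation: "is_triangulation P T"
    and edge_ne: "a \<noteq> b" and diagonal_ne: "c \<noteq> d"
    and abc_in: "{a, b, c} \<in> T" and abd_in: "{a, b, d} \<in> T"
    and convex: "convex_quad a b c d"
begin

abbreviation flipped :: "pt set set" where
  "flipped \<equiv> (T - {{a, b, c}, {a, b, d}}) \<union> {{a, c, d}, {b, c, d}}"

lemma distinct: "a \<noteq> b" "a \<noteq> c" "b \<noteq> c" "a \<noteq> d" "b \<noteq> d" "c \<noteq> d"
  using card_3_distinct[OF triangulation_triangle(2)[OF triangulation abc_in]]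
    card_3_distinct[OF triangulation_triangle(2)[OF triangulation abd_in]] edge_ne diagonal_ne
  by simp_all

lemma swap_edge: "convex_flip P T b a c d"
  using triangulation edge_ne diagonal_ne abc_in abd_in convex_quad_swap_edge[OF convex]
  by unfold_locales (auto simp: insert_commute)

lemma swap_diagonal: "convex_flip P T a b d c"
  using triangulation edge_ne diagonal_ne abc_in abd_in convex_quad_swap_diagonal[OF convex]
  by unfold_locales auto

lemma vertex_notin_hull_others:
  "a \<notin> convex hull {c, d}" "b \<notin> convex hull {c, d}"
  "c \<notin> convex hull {d, a}" "d \<notin> convex hull {a, c}"
  by (rule convex_quad_notin_hull[OF convex]; use distinct in auto)+

text \<open>The segment \<open>cd\<close> joins the two triangles of the convex union, so by connectedness
  it meets their common edge \<open>ab\<close>.\<close>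
lemma diagonals_meet: "\<exists>p. p \<in> closed_segment a b \<and> p \<in> closed_segment c d"
proof -
  have int: "convex hull {a, b, c} \<inter> convex hull {a, b, d} = convex hull {a, b}"
    using triangulation_hull_Int[OF triangulation abc_in abd_in] distinct by (simp add: insert_commute)
  have "convex (convex hull {a, b, c} \<union> convex hull {a, b, d})"
    using convex unfolding convex_quad_def by blast
  moreover have "{c, d} \<subseteq> convex hull {a, b, c} \<union> convex hull {a, b, d}" by (auto intro: hull_inc)
  ultimately have sub: "closed_segment c d \<subseteq> convex hull {a, b, c} \<union> convex hull {a, b, d}"
    unfolding segment_convex_hull by (simp add: hull_minimal)
  have "closed (convex hull {a, b, c})" "closed (convex hull {a, b, d})"
    by (simp_all add: compact_imp_closed finite_imp_compact_convex_hull)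
  moreover have "c \<in> convex hull {a, b, c} \<inter> closed_segment c d"
    and "d \<in> convex hull {a, b, d} \<inter> closed_segment c d" by (auto intro: hull_inc)
  ultimately have "convex hull {a, b, c} \<inter> convex hull {a, b, d} \<inter> closed_segment c d \<noteq> {}"
    using connected_closedD[OF connected_segment _ sub] by blast
  then show ?thesis using int by (auto simp: segment_convex_hull)
qed

lemma not_collinear_acd: "\<not> collinear {a, c, d}"
proof
  assume "collinear {a, c, d}"
  then have "a \<in> convex hull {c, d} \<or> c \<in> convex hull {d, a} \<or> d \<in> convex hull {a, c}"
    unfolding collinear_between_cases between_mem_segment segment_convex_hull .
  then show False using vertex_notin_hull_others by blast
qed

text \<open>The crossing point of the diagonals would lie in \<open>acd \<inter> abc = ac\<close>; as it is also on
  \<open>ab\<close>, it would be \<open>a\<close>, putting \<open>a\<close> on the segment \<open>cd\<close>.\<close>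
lemma acd_notin: "{a, c, d} \<notin> T"
proof
  assume acd: "{a, c, d} \<in> T"
  obtain p where p_ab: "p \<in> closed_segment a b" and p_cd: "p \<in> closed_segment c d"
    using diagonals_meet by blast
  have "{a, c, d} \<inter> {a, b, c} = {a, c}" using distinct by auto
  then have int: "convex hull {a, c, d} \<inter> convex hull {a, b, c} = closed_segment a c"
    using triangulation_hull_Int[OF triangulation acd abc_in] by (simp add: segment_convex_hull)
  have "p \<in> convex hull {a, c, d}"
    using p_cd unfolding segment_convex_hull by (rule hull_mono[THEN subsetD, rotated]) auto
  moreover have "p \<in> convex hull {a, b, c}"
    using p_ab unfolding segment_convex_hull by (rule hull_mono[THEN subsetD, rotated]) auto
  ultimately have "p \<in> closed_segment a c" using int by blast
  then obtain u where u: "0 \<le> u" "u \<le> 1" "p = (1 - u) *\<^sub>R a + u *\<^sub>R c"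
    unfolding in_segment by blast
  have pa: "p - a = u *\<^sub>R (c - a)" using u(3) by (simp add: algebra_simps)
  have "cross (b - a) (c - a) \<noteq> 0"
    using cross_ne_0_if_triangle triangulation_triangle[OF triangulation abc_in] by blast
  moreover have "cross (b - a) (p - a) = u * cross (b - a) (c - a)"
    unfolding pa by (simp add: cross_def algebra_simps)
  ultimately have "u = 0" using cross_closed_segment_eq_0[OF p_ab] by simp
  then have "a \<in> convex hull {c, d}" using u p_cd by (simp add: segment_convex_hull)
  then show False using vertex_notin_hull_others by blast
qed

lemma not_collinear_bcd: "\<not> collinear {b, c, d}"
  using convex_flip.not_collinear_acd[OF swap_edge] .

lemma bcd_notin: "{b, c, d} \<notin> T"
  using convex_flip.acd_notin[OF swap_edge] .

lemma edge_ends_opposite_sides: "cross (d - c) (a - c) * cross (d - c) (b - c) < 0"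
proof -
  define La where "La = cross (d - c) (a - c)"
  define Lb where "Lb = cross (d - c) (b - c)"
  have La0: "La \<noteq> 0" and Lb0: "Lb \<noteq> 0"
    using collinear_if_cross_eq_0[of d c a] collinear_if_cross_eq_0[of d c b]
      not_collinear_acd not_collinear_bcd
    unfolding La_def Lb_def by (auto simp: insert_commute)
  obtain p where p_ab: "p \<in> closed_segment a b" and p_cd: "p \<in> closed_segment c d"
    using diagonals_meet by blast
  obtain l where l: "0 \<le> l" "l \<le> 1" "p = (1 - l) *\<^sub>R a + l *\<^sub>R b"
    using p_ab unfolding in_segment by blast
  have pc: "p - c = (1 - l) *\<^sub>R (a - c) + l *\<^sub>R (b - c)" unfolding l(3) by (simp add: algebra_simps)
  have eq: "(1 - l) * La + l * Lb = 0"
    using cross_closed_segment_eq_0[OF p_cd] unfolding pc La_def Lb_def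
    by (simp add: cross_def algebra_simps)
  have "l \<noteq> 0" "l \<noteq> 1" using l p_cd vertex_notin_hull_others(1,2) by (auto simp: segment_convex_hull)
  then have l01: "0 < l" "l < 1" using l by auto
  have "(1 - l) * (La * La) + l * (La * Lb) = 0"
    using arg_cong[OF eq, of "\<lambda>z. z * La"] by (simp add: algebra_simps)
  moreover have "(1 - l) * (La * La) > 0" using l01 La0 by (auto simp: zero_less_mult_iff linorder_neq_iff)
  ultimately have "l * (La * Lb) < 0" by linarith
  then show ?thesis using l01 unfolding La_def Lb_def by (simp add: mult_less_0_iff)
qed

lemma new_triangles_hull_Int: "convex hull {a, c, d} \<inter> convex hull {b, c, d} = convex hull {c, d}"
proof
  show "convex hull {a, c, d} \<inter> convex hull {b, c, d} \<subseteq> convex hull {c, d}"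
  proof
    fix x assume x: "x \<in> convex hull {a, c, d} \<inter> convex hull {b, c, d}"
    obtain \<alpha> where \<alpha>: "0 \<le> \<alpha>" "cross (d - c) (x - c) = \<alpha> * cross (d - c) (a - c)"
      "\<alpha> = 0 \<Longrightarrow> x \<in> closed_segment c d"
      using hull_triangle_cross_side[of x a c d] x by blast
    obtain \<beta> where \<beta>: "0 \<le> \<beta>" "cross (d - c) (x - c) = \<beta> * cross (d - c) (b - c)"
      using hull_triangle_cross_side[of x b c d] x by blast
    have "\<alpha> = 0"
      using nonneg_multiples_of_opposite_signs_eq[OF edge_ends_opposite_sides \<alpha>(1) \<beta>(1)] \<alpha>(2) \<beta>(2)
      by simp
    then show "x \<in> convex hull {c, d}" using \<alpha>(3) by (simp add: segment_convex_hull)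
  qed
qed (simp add: hull_mono)

lemma hull_acd_subset: "convex hull {a, c, d} \<subseteq> convex hull {a, b, c} \<union> convex hull {a, b, d}"
  using convex unfolding convex_quad_def by (intro hull_minimal) (auto intro: hull_inc)

lemma hull_abc_subset: "convex hull {a, b, c} \<subseteq> convex hull {a, c, d} \<union> convex hull {b, c, d}"
  using diagonals_meet hull_triangle_subset_if_diagonals_meet by (metis segment_convex_hull)

text \<open>Another triangle cannot contain the edge \<open>ab\<close>; if it contains \<open>b\<close> but not \<open>a\<close>, its
  common part with \<open>abc\<close> lies on \<open>bc\<close>, which meets \<open>acd\<close> only in \<open>c\<close>.\<close>
lemma hull_acd_Int_other_within_abc:
  assumes t: "t \<in> T" "t \<noteq> {a, b, c}" "t \<noteq> {a, b, d}"
    and x: "x \<in> convex hull {a, b, c}" "x \<in> convex hull t" "x \<in> convex hull {a, c, d}"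
  shows "x \<in> convex hull ({a, c, d} \<inter> t)"
proof -
  have x_Int: "x \<in> convex hull ({a, b, c} \<inter> t)"
    using triangulation_hull_Int[OF triangulation abc_in t(1)] x by blast
  show ?thesis
  proof (cases "b \<in> t")
    case False
    then have "{a, b, c} \<inter> t \<subseteq> {a, c, d} \<inter> t" by auto
    then show ?thesis using x_Int hull_mono by blast
  next
    case True
    have "a \<notin> t"
    proof
      assume "a \<in> t"
      then obtain e where e: "t = {a, b, e}" "e \<noteq> a" "e \<noteq> b"
        using card_3_obtain_third[OF triangulation_triangle(2)[OF triangulation t(1)]] True edge_ne
        by blast
      then have "e = c \<or> e = d"
        using third_triangle_on_edge[OF triangulation abc_in abd_in diagonal_ne] t(1) by simp
      then show False using t e by auto
    qed
    then have sub: "{a, b, c} \<inter> t \<subseteq> {b, c}" by auto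
    then have "x \<in> convex hull {b, c}" using x_Int hull_mono by blast
    then have x_c: "x = c" using hull_edge_Int_opposite_triangle[OF edge_ends_opposite_sides] x(3) by blast
    show ?thesis
    proof (cases "c \<in> t")
      case True
      then show ?thesis using x_c by (auto intro: hull_inc)
    next
      case False
      then have "{a, b, c} \<inter> t \<subseteq> {b}" using sub by auto
      then have "x \<in> convex hull {b}" using x_Int hull_mono by blast
      then show ?thesis using x_c distinct by simp
    qed
  qed
qed

lemma hull_acd_Int_other:
  assumes t: "t \<in> T" "t \<noteq> {a, b, c}" "t \<noteq> {a, b, d}"
  shows "convex hull {a, c, d} \<inter> convex hull t = convex hull ({a, c, d} \<inter> t)"
proof
  show "convex hull {a, c, d} \<inter> convex hull t \<subseteq> convex hull ({a, c, d} \<inter> t)"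
  proof
    fix x assume x: "x \<in> convex hull {a, c, d} \<inter> convex hull t"
    then consider "x \<in> convex hull {a, b, c}" | "x \<in> convex hull {a, b, d}"
      using hull_acd_subset by blast
    then show "x \<in> convex hull ({a, c, d} \<inter> t)"
    proof cases
      case 1
      then show ?thesis using hull_acd_Int_other_within_abc[OF t] x by blast
    next
      case 2
      then have "x \<in> convex hull ({a, d, c} \<inter> t)"
        using convex_flip.hull_acd_Int_other_within_abc[OF swap_diagonal, of t x] t x
        by (simp add: insert_commute)
      then show ?thesis by (simp add: insert_commute)
    qed
  qed
qed (rule convex_hull_Int_subset)

lemma hull_bcd_Int_other:
  assumes "t \<in> T" "t \<noteq> {a, b, c}" "t \<noteq> {a, b, d}"
  shows "convex hull {b, c, d} \<inter> convex hull t = convex hull ({b, c, d} \<inter> t)"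
  using convex_flip.hull_acd_Int_other[OF swap_edge, of t] assms by (simp add: insert_commute)

lemma flipped_triangles:
  assumes "t \<in> flipped"
  shows "t \<subseteq> P \<and> card t = 3 \<and> \<not> affine_dependent t"
proof -
  have "{a, b, c} \<subseteq> P" "{a, b, d} \<subseteq> P"
    using triangulation_triangle(1)[OF triangulation] abc_in abd_in by auto
  then have "{a, c, d} \<subseteq> P \<and> card {a, c, d} = 3 \<and> \<not> affine_dependent {a, c, d}"
    and "{b, c, d} \<subseteq> P \<and> card {b, c, d} = 3 \<and> \<not> affine_dependent {b, c, d}"
    using distinct not_collinear_acd not_collinear_bcd collinear_3_eq_affine_dependent by auto
  then show ?thesis using assms triangulation_triangle[OF triangulation] by auto
qed

lemma flipped_hull_Union: "(\<Union>t\<in>flipped. convex hull t) = (\<Union>t\<in>T. convex hull t)"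
proof (rule antisym; rule UN_least)
  fix t assume "t \<in> flipped"
  then consider "t \<in> T" | "t = {a, c, d}" | "t = {b, c, d}" by blast
  then show "convex hull t \<subseteq> (\<Union>t\<in>T. convex hull t)"
  proof cases
    case 3
    have "convex hull {b, c, d} \<subseteq> convex hull {a, b, c} \<union> convex hull {a, b, d}"
      using convex_flip.hull_acd_subset[OF swap_edge] by (simp add: insert_commute)
    then show ?thesis using 3 abc_in abd_in by blast
  qed (use hull_acd_subset abc_in abd_in in blast)+
next
  fix t assume "t \<in> T"
  then consider "t \<in> flipped" | "t = {a, b, c}" | "t = {a, b, d}" by blast
  then show "convex hull t \<subseteq> (\<Union>t\<in>flipped. convex hull t)"
  proof cases
    case 3
    have "convex hull {a, b, d} \<subseteq> convex hull {a, c, d} \<union> convex hull {b, c, d}"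
      using convex_flip.hull_abc_subset[OF swap_diagonal] by (simp add: insert_commute)
    then show ?thesis using 3 by blast
  qed (use hull_abc_subset in blast)+
qed

lemma flipped_hull_Int:
  assumes "t \<in> flipped" "t' \<in> flipped"
  shows "convex hull t \<inter> convex hull t' = convex hull (t \<inter> t')"
proof -
  define old where "old = T - {{a, b, c}, {a, b, d}}"
  define new where "new = {{a, c, d}, {b, c, d}}"
  have old_old: "convex hull s \<inter> convex hull s' = convex hull (s \<inter> s')"
    if "s \<in> old" "s' \<in> old" for s s'
    using that triangulation_hull_Int[OF triangulation] unfolding old_def by blast
  have new_old: "convex hull s \<inter> convex hull s' = convex hull (s \<inter> s')"
    if "s \<in> new" "s' \<in> old" for s s'
    using that hull_acd_Int_other hull_bcd_Int_other unfolding new_def old_def by blast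
  have "{a, c, d} \<inter> {b, c, d} = {c, d}" "{b, c, d} \<inter> {a, c, d} = {c, d}" using distinct by auto
  then have new_new: "convex hull s \<inter> convex hull s' = convex hull (s \<inter> s')"
    if "s \<in> new" "s' \<in> new" for s s'
    using that new_triangles_hull_Int unfolding new_def by (auto simp: Int_commute)
  have "t \<in> old \<union> new" "t' \<in> old \<union> new" using assms unfolding old_def new_def by simp_all
  then show ?thesis
    using old_old new_new new_old Int_commute by (metis UnE)
qed

lemma flip_is_triangulation: "is_triangulation P flipped"
  unfolding is_triangulation_def
proof (intro conjI)
  show "finite P" using triangulation_finite[OF triangulation] .
  show "\<forall>t\<in>flipped. t \<subseteq> P \<and> card t = 3 \<and> \<not> affine_dependent t"
    by (intro ballI flipped_triangles)
  show "(\<Union>t\<in>flipped. convex hull t) = convex hull P"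
    using triangulation_hull_Union[OF triangulation] flipped_hull_Union by simp
  show "\<forall>t\<in>flipped. \<forall>t'\<in>flipped. convex hull t \<inter> convex hull t' = convex hull (t \<inter> t')"
    by (intro ballI flipped_hull_Int)
  have "\<Union>flipped = \<Union>T"
  proof
    show "\<Union>flipped \<subseteq> \<Union>T" using abc_in abd_in by blast
    have "{a, b, c} \<union> {a, b, d} \<subseteq> \<Union>{{a, c, d}, {b, c, d}}" by blast
    then show "\<Union>T \<subseteq> \<Union>flipped" by blast
  qed
  then show "\<Union>flipped = P" using triangulation_Union[OF triangulation] by simp
qed

lemma flip_step_flipped: "flip_step T {a, b} flipped"
  unfolding flip_step_def using edge_ne diagonal_ne abc_in abd_in convex
  by (intro exI[of _ a] exI[of _ b] exI[of _ c] exI[of _ d]) simp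

lemma new_diag_eq: "new_diag T {a, b} = {c, d}"
  unfolding new_diag_def
proof (rule the_equality)
  fix g
  assume "\<exists>a' b' c' d'. {a, b} = {a', b'} \<and> a' \<noteq> b' \<and> c' \<noteq> d' \<and>
    {a', b', c'} \<in> T \<and> {a', b', d'} \<in> T \<and> g = {c', d'}"
  then obtain a' b' c' d' where w: "{a, b} = {a', b'}" "c' \<noteq> d'"
    "{a', b', c'} \<in> T" "{a', b', d'} \<in> T" "g = {c', d'}"
    by blast
  have "{a', b', c'} = {a, b, c'}" "{a', b', d'} = {a, b, d'}" using w(1) by auto
  then have "c' = c \<or> c' = d" "d' = c \<or> d' = d"
    using third_triangle_on_edge[OF triangulation abc_in abd_in diagonal_ne] w(3,4) by simp_all
  then show "g = {c, d}" using w(2,5) by auto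
next
  show "\<exists>a' b' c' d'. {a, b} = {a', b'} \<and> a' \<noteq> b' \<and> c' \<noteq> d' \<and>
    {a', b', c'} \<in> T \<and> {a', b', d'} \<in> T \<and> {c, d} = {c', d'}"
    using edge_ne diagonal_ne abc_in abd_in
    by (intro exI[of _ a] exI[of _ b] exI[of _ c] exI[of _ d]) simp
qed

end

section \<open>Replaying a flip sequence\<close>

locale flip_history =
  fixes P :: "pt set" and Ts :: "pt set set list" and n :: nat and A B C D :: "nat \<Rightarrow> pt"
  assumes initial: "is_triangulation P (Ts ! 0)"
    and flip: "\<And>i. i < n \<Longrightarrow> convex_flip P (Ts ! i) (A i) (B i) (C i) (D i)"
    and step: "\<And>i. i < n \<Longrightarrow> Ts ! Suc i =
      (Ts ! i - {{A i, B i, C i}, {A i, B i, D i}}) \<union> {{A i, C i, D i}, {B i, C i, D i}}"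
begin

definition removed :: "nat \<Rightarrow> pt set set" where
  "removed i = {{A i, B i, C i}, {A i, B i, D i}}"

definition created :: "nat \<Rightarrow> pt set set" where
  "created i = {{A i, C i, D i}, {B i, C i, D i}}"

lemma removed_subset: "i < n \<Longrightarrow> removed i \<subseteq> Ts ! i"
  using convex_flip.abc_in[OF flip] convex_flip.abd_in[OF flip] unfolding removed_def by auto

lemma step_removed_created: "i < n \<Longrightarrow> Ts ! Suc i = (Ts ! i - removed i) \<union> created i"
  using step unfolding removed_def created_def by simp

text \<open>\<open>born b t\<close>: the triangle \<open>t\<close> enters the run in \<open>Ts ! b\<close>, either initially (\<open>b = 0\<close>)
  or created by flip \<open>b - 1\<close>.\<close>
definition born :: "nat \<Rightarrow> pt set \<Rightarrow> bool" where
  "born b t \<longleftrightarrow> b \<le> n \<and> (b = 0 \<and> t \<in> Ts ! 0 \<or> 0 < b \<and> t \<in> created (b - 1))"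

definition survives :: "nat \<Rightarrow> pt set \<Rightarrow> nat \<Rightarrow> bool" where
  "survives b t k \<longleftrightarrow> (\<forall>j. b \<le> j \<and> j < k \<longrightarrow> t \<notin> removed j)"

definition removed_at :: "nat \<Rightarrow> pt set \<Rightarrow> nat \<Rightarrow> bool" where
  "removed_at b t i \<longleftrightarrow> b \<le> i \<and> i < n \<and> t \<in> removed i \<and> survives b t i"

definition depends :: "nat \<Rightarrow> nat \<Rightarrow> bool" where
  "depends i m \<longleftrightarrow> i < m \<and> m < n \<and> (\<exists>t\<in>removed m. t \<in> created i \<and> survives (Suc i) t m)"

lemma born_survives_mem:
  assumes "born b t" "survives b t k" "b \<le> k" "k \<le> n"
  shows "t \<in> Ts ! k"
  using assms(2-4)
proof (induction k)
  case 0
  then show ?case using assms(1) unfolding born_def by auto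
next
  case (Suc k)
  show ?case
  proof (cases "b = Suc k")
    case True
    then have "t \<in> created k" using assms(1) unfolding born_def by auto
    then show ?thesis using step_removed_created[of k] Suc.prems by auto
  next
    case False
    then have "t \<in> Ts ! k" "t \<notin> removed k" using Suc unfolding survives_def by auto
    then show ?thesis using step_removed_created[of k] Suc.prems by auto
  qed
qed

lemma mem_born_survives:
  assumes "k \<le> n" "t \<in> Ts ! k"
  shows "\<exists>b\<le>k. born b t \<and> survives b t k"
  using assms
proof (induction k)
  case 0
  then show ?case unfolding born_def survives_def by auto
next
  case (Suc k)
  show ?case
  proof (cases "t \<in> created k")
    case True
    then show ?thesis using Suc.prems unfolding born_def survives_def by (intro exI[of _ "Suc k"]) auto
  next
    case False
    then have "t \<in> Ts ! k" "t \<notin> removed k" using Suc.prems step_removed_created[of k] by auto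
    then obtain b where "b \<le> k" "born b t" "survives b t k" using Suc by auto
    then show ?thesis using \<open>t \<notin> removed k\<close> unfolding survives_def
      by (intro exI[of _ b]) (auto simp: less_Suc_eq)
  qed
qed

lemma removed_at_unique: "removed_at b t i \<Longrightarrow> removed_at b t j \<Longrightarrow> i = j"
  unfolding removed_at_def survives_def by (metis linorder_neq_iff)

lemma removed_at_exists:
  assumes "b \<le> j" "j < n" "t \<in> removed j"
  shows "\<exists>i. removed_at b t i"
proof -
  define i where "i = (LEAST j. b \<le> j \<and> j < n \<and> t \<in> removed j)"
  have i: "b \<le> i \<and> i < n \<and> t \<in> removed i"
    using LeastI[of "\<lambda>j. b \<le> j \<and> j < n \<and> t \<in> removed j"] assms i_def by blast
  have "survives b t i"
    unfolding survives_def
  proof (intro allI impI)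
    fix j assume j: "b \<le> j \<and> j < i"
    then have "j < n" using i by simp
    then show "t \<notin> removed j"
      using not_less_Least[of j "\<lambda>j. b \<le> j \<and> j < n \<and> t \<in> removed j"] j i_def by blast
  qed
  then show ?thesis using i unfolding removed_at_def by blast
qed

text \<open>The occurrences still present after performing the flips in \<open>S\<close> (in any order
  compatible with \<open>depends\<close>); \<open>live S\<close> is the resulting triangulation.\<close>
definition live_occurrences :: "nat set \<Rightarrow> (nat \<times> pt set) set" where
  "live_occurrences S =
    {(b, t). born b t \<and> (b = 0 \<or> b - 1 \<in> S) \<and> (\<forall>i. removed_at b t i \<longrightarrow> i \<notin> S)}"

definition live :: "nat set \<Rightarrow> pt set set" where
  "live S = snd ` live_occurrences S"

definition dependency_closed :: "nat set \<Rightarrow> bool" where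
  "dependency_closed S \<longleftrightarrow> (\<forall>i\<in>S. \<forall>j. depends j i \<longrightarrow> j \<in> S)"

lemma live_empty: "live {} = Ts ! 0"
  unfolding live_def live_occurrences_def born_def by force

lemma inj_on_live_occurrences_empty: "inj_on snd (live_occurrences {})"
  unfolding live_occurrences_def born_def inj_on_def by auto

lemma live_all: "live {..<n} = Ts ! n"
proof
  show "live {..<n} \<subseteq> Ts ! n"
  proof
    fix t assume "t \<in> live {..<n}"
    then obtain b where bt: "born b t" and never: "\<forall>i. removed_at b t i \<longrightarrow> i \<notin> {..<n}"
      unfolding live_def live_occurrences_def by force
    have "survives b t n"
      unfolding survives_def using removed_at_exists never unfolding removed_at_def by blast
    moreover have "b \<le> n" using bt unfolding born_def by simp
    ultimately show "t \<in> Ts ! n" using born_survives_mem[OF bt] by simp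
  qed
  show "Ts ! n \<subseteq> live {..<n}"
  proof
    fix t assume "t \<in> Ts ! n"
    then obtain b where b: "b \<le> n" "born b t" "survives b t n" using mem_born_survives by blast
    then have "(b, t) \<in> live_occurrences {..<n}"
      unfolding live_occurrences_def removed_at_def survives_def by auto
    then show "t \<in> live {..<n}" unfolding live_def by force
  qed
qed

lemma live_occurrences_insert_old:
  "(b, t) \<in> live_occurrences (insert m S) \<Longrightarrow> b \<noteq> Suc m \<Longrightarrow> (b, t) \<in> live_occurrences S"
  unfolding live_occurrences_def by auto

lemma live_occurrences_insert_kept:
  "(b, t) \<in> live_occurrences S \<Longrightarrow> \<not> removed_at b t m \<Longrightarrow> (b, t) \<in> live_occurrences (insert m S)"
  unfolding live_occurrences_def by auto

lemma live_occurrences_created: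
  "(Suc m, t) \<in> live_occurrences S \<Longrightarrow> t \<in> created m"
  unfolding live_occurrences_def born_def by auto

lemma live_occurrences_insert_created:
  assumes "dependency_closed S" "m \<notin> S" "m < n" "t \<in> created m"
  shows "(Suc m, t) \<in> live_occurrences (insert m S)"
proof -
  have "i \<notin> insert m S" if i: "removed_at (Suc m) t i" for i
  proof
    assume "i \<in> insert m S"
    moreover have "i \<noteq> m" using i unfolding removed_at_def by simp
    ultimately have "i \<in> S" by simp
    moreover have "depends m i" using i assms(4) unfolding depends_def removed_at_def by auto
    ultimately show False using assms(1,2) unfolding dependency_closed_def by blast
  qed
  then show ?thesis using assms(3,4) unfolding live_occurrences_def born_def by auto
qed

lemma dependency_closed_insert:
  "dependency_closed S \<Longrightarrow> (\<And>j. depends j m \<Longrightarrow> j \<in> S) \<Longrightarrow> dependency_closed (insert m S)"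
  unfolding dependency_closed_def by auto

context
  fixes S :: "nat set" and m :: nat
  assumes closed: "dependency_closed S" and m_notin: "m \<notin> S" and m_lt: "m < n"
    and deps: "\<And>j. depends j m \<Longrightarrow> j \<in> S"
    and inj: "inj_on snd (live_occurrences S)" and triangulation: "is_triangulation P (live S)"
begin

text \<open>The creator of a triangle removed by flip \<open>m\<close>, if any, is a dependency of \<open>m\<close> and
  hence in \<open>S\<close>; the triangle is first removed by \<open>m\<close>, hence by no flip of \<open>S\<close>.\<close>
lemma removed_live_occurrence:
  assumes t: "t \<in> removed m"
  obtains b where "(b, t) \<in> live_occurrences S" "removed_at b t m"
proof -
  obtain b where b: "b \<le> m" "born b t" "survives b t m"
    using mem_born_survives[of m t] removed_subset[OF m_lt] t m_lt by auto
  have at_m: "removed_at b t m" using b t m_lt unfolding removed_at_def by simp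
  have "b = 0 \<or> b - 1 \<in> S"
  proof (cases "b = 0")
    case False
    then have "t \<in> created (b - 1)" using b unfolding born_def by simp
    then have "depends (b - 1) m" unfolding depends_def using False b t m_lt by (intro conjI bexI[of _ t]) auto
    then show ?thesis using deps by blast
  qed simp
  moreover have "\<forall>i. removed_at b t i \<longrightarrow> i \<notin> S" using removed_at_unique[OF at_m] m_notin by blast
  ultimately show thesis using that b at_m unfolding live_occurrences_def by blast
qed

lemma removed_subset_live: "removed m \<subseteq> live S"
  using removed_live_occurrence unfolding live_def by (metis image_eqI snd_conv subsetI)

lemma convex_flip_live: "convex_flip P (live S) (A m) (B m) (C m) (D m)"
  using triangulation convex_flip.edge_ne[OF flip[OF m_lt]] convex_flip.diagonal_ne[OF flip[OF m_lt]]
    convex_flip.convex[OF flip[OF m_lt]] removed_subset_live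
  unfolding removed_def by unfold_locales auto

lemma created_disjoint_live: "created m \<inter> live S = {}"
  using convex_flip.acd_notin[OF convex_flip_live] convex_flip.bcd_notin[OF convex_flip_live]
  unfolding created_def by auto

lemma live_insert: "live (insert m S) = (live S - removed m) \<union> created m"
proof
  show "live (insert m S) \<subseteq> (live S - removed m) \<union> created m"
  proof
    fix t assume "t \<in> live (insert m S)"
    then obtain b where occ: "(b, t) \<in> live_occurrences (insert m S)" unfolding live_def by force
    show "t \<in> (live S - removed m) \<union> created m"
    proof (cases "b = Suc m")
      case True
      then show ?thesis using occ live_occurrences_created by blast
    next
      case False
      then have occ_S: "(b, t) \<in> live_occurrences S" using live_occurrences_insert_old occ by blast
      have "t \<notin> removed m"
      proof
        assume "t \<in> removed m"
        then obtain b' where b': "(b', t) \<in> live_occurrences S" "removed_at b' t m"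
          using removed_live_occurrence by blast
        then have "b' = b" using inj occ_S unfolding inj_on_def by force
        then show False using b' occ unfolding live_occurrences_def by auto
      qed
      moreover have "t \<in> live S" using occ_S unfolding live_def by force
      ultimately show ?thesis by blast
    qed
  qed
  show "(live S - removed m) \<union> created m \<subseteq> live (insert m S)"
  proof
    fix t assume t: "t \<in> (live S - removed m) \<union> created m"
    show "t \<in> live (insert m S)"
    proof (cases "t \<in> created m")
      case True
      then show ?thesis using live_occurrences_insert_created[OF closed m_notin m_lt]
        unfolding live_def by force
    next
      case False
      then have "t \<in> live S" "t \<notin> removed m" using t by auto
      then obtain b where "(b, t) \<in> live_occurrences S" unfolding live_def by force
      moreover have "\<not> removed_at b t m" using \<open>t \<notin> removed m\<close> unfolding removed_at_def by simp
      ultimately show ?thesis using live_occurrences_insert_kept unfolding live_def by force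
    qed
  qed
qed

lemma inj_on_live_occurrences_insert: "inj_on snd (live_occurrences (insert m S))"
proof (rule inj_onI)
  fix x y
  assume x: "x \<in> live_occurrences (insert m S)" and y: "y \<in> live_occurrences (insert m S)"
    and eq: "snd x = snd y"
  obtain b t where x_eq: "x = (b, t)" by (cases x)
  obtain b' where y_eq: "y = (b', t)" using eq x_eq by (cases y) auto
  have old: "t \<in> live S" if "c \<noteq> Suc m" "(c, t) \<in> live_occurrences (insert m S)" for c
    using live_occurrences_insert_old[OF that(2,1)] unfolding live_def by force
  have new: "t \<in> created m" if "(Suc m, t) \<in> live_occurrences (insert m S)"
    using live_occurrences_created[OF that] .
  consider "b = Suc m" "b' = Suc m" | "b \<noteq> Suc m" "b' \<noteq> Suc m"
    | "b = Suc m \<longleftrightarrow> b' \<noteq> Suc m" by blast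
  then show "x = y"
  proof cases
    case 1
    then show ?thesis using x_eq y_eq by simp
  next
    case 2
    then have "(b, t) \<in> live_occurrences S" "(b', t) \<in> live_occurrences S"
      using live_occurrences_insert_old x y x_eq y_eq by auto
    then show ?thesis using inj x_eq y_eq unfolding inj_on_def by force
  next
    case 3
    then show ?thesis using old new x y x_eq y_eq created_disjoint_live by (metis disjoint_iff)
  qed
qed

lemma triangulation_live_insert: "is_triangulation P (live (insert m S))"
  using convex_flip.flip_is_triangulation[OF convex_flip_live]
  unfolding live_insert removed_def created_def .

lemma flip_step_live: "flip_step (live S) {A m, B m} (live (insert m S))"
  using convex_flip.flip_step_flipped[OF convex_flip_live] unfolding live_insert removed_def created_def .

end

context
  fixes \<sigma> :: "nat \<Rightarrow> nat"
  assumes bij: "bij_betw \<sigma> {..<n} {..<n}"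
    and order: "\<And>k l. k < n \<Longrightarrow> l < n \<Longrightarrow> depends (\<sigma> l) (\<sigma> k) \<Longrightarrow> l < k"
begin

lemma next_in_order:
  assumes k: "k < n"
  shows "\<sigma> k < n" "\<sigma> k \<notin> \<sigma> ` {..<k}" "\<And>j. depends j (\<sigma> k) \<Longrightarrow> j \<in> \<sigma> ` {..<k}"
proof -
  show "\<sigma> k < n" using bij k by (auto simp: bij_betw_def)
  show "\<sigma> k \<notin> \<sigma> ` {..<k}"
  proof
    assume "\<sigma> k \<in> \<sigma> ` {..<k}"
    then obtain l where l: "l < k" "\<sigma> l = \<sigma> k" by auto
    then have "l = k" using inj_onD[OF bij_betw_imp_inj_on[OF bij] l(2)] k by simp
    then show False using l by simp
  qed
  fix j assume dep: "depends j (\<sigma> k)"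
  then have "j \<in> \<sigma> ` {..<n}" using bij unfolding depends_def bij_betw_def by simp
  then obtain l where l: "l < n" "j = \<sigma> l" by auto
  then have "l < k" using order[OF k l(1)] dep by simp
  then show "j \<in> \<sigma> ` {..<k}" using l by blast
qed

lemma prefix_invariant:
  assumes "k \<le> n"
  shows "dependency_closed (\<sigma> ` {..<k}) \<and> inj_on snd (live_occurrences (\<sigma> ` {..<k})) \<and>
    is_triangulation P (live (\<sigma> ` {..<k}))"
  using assms
proof (induction k)
  case 0
  show ?case
    using inj_on_live_occurrences_empty live_empty initial unfolding dependency_closed_def by simp
next
  case (Suc k)
  then have k: "k < n" and closed: "dependency_closed (\<sigma> ` {..<k})"
    and inj: "inj_on snd (live_occurrences (\<sigma> ` {..<k}))"
    and tri: "is_triangulation P (live (\<sigma> ` {..<k}))" by auto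
  note step = closed next_in_order(2,1,3)[OF k] inj tri
  have "dependency_closed (insert (\<sigma> k) (\<sigma> ` {..<k}))"
    by (rule dependency_closed_insert[OF closed next_in_order(3)[OF k]])
  moreover have "inj_on snd (live_occurrences (insert (\<sigma> k) (\<sigma> ` {..<k})))"
    by (rule inj_on_live_occurrences_insert[OF step])
  moreover have "is_triangulation P (live (insert (\<sigma> k) (\<sigma> ` {..<k})))"
    by (rule triangulation_live_insert[OF step])
  ultimately show ?case by (simp add: lessThan_Suc)
qed

lemma replay_flip_run:
  "flip_run P (Ts ! 0) (map (\<lambda>k. {A (\<sigma> k), B (\<sigma> k)}) [0..<n])
    (map (\<lambda>k. live (\<sigma> ` {..<k})) [0..<Suc n])"
  unfolding flip_run_def
proof (intro conjI allI impI)
  fix i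
  show "is_triangulation P (map (\<lambda>k. live (\<sigma> ` {..<k})) [0..<Suc n] ! i)"
    if "i < length (map (\<lambda>k. live (\<sigma> ` {..<k})) [0..<Suc n])"
    using that prefix_invariant[of i] by (simp del: upt_Suc)
  assume "i < length (map (\<lambda>k. {A (\<sigma> k), B (\<sigma> k)}) [0..<n])"
  then have i: "i < n" by simp
  have "dependency_closed (\<sigma> ` {..<i})" "inj_on snd (live_occurrences (\<sigma> ` {..<i}))"
    "is_triangulation P (live (\<sigma> ` {..<i}))" using prefix_invariant[of i] i by auto
  from flip_step_live[OF this(1) next_in_order(2,1,3)[OF i] this(2,3)]
  show "flip_step (map (\<lambda>k. live (\<sigma> ` {..<k})) [0..<Suc n] ! i)
    (map (\<lambda>k. {A (\<sigma> k), B (\<sigma> k)}) [0..<n] ! i) (map (\<lambda>k. live (\<sigma> ` {..<k})) [0..<Suc n] ! (i + 1))"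
    using i by (simp add: lessThan_Suc del: upt_Suc)
qed (simp_all add: live_empty del: upt_Suc)

lemma replay_last: "last (map (\<lambda>k. live (\<sigma> ` {..<k})) [0..<Suc n]) = Ts ! n"
  using bij live_all by (simp add: bij_betw_def)

end

lemma triangle_on_flipped_edge_removed:
  assumes p: "p < n" and t: "t \<in> Ts ! p" "{A p, B p} \<subseteq> t"
  shows "t \<in> removed p"
proof -
  note fp = flip[OF p]
  have "A p \<in> t" "B p \<in> t" using t(2) by auto
  then obtain e where e: "t = {A p, B p, e}"
    by (rule card_3_obtain_third[OF triangulation_triangle(2)[OF convex_flip.triangulation[OF fp] t(1)]
      _ _ convex_flip.edge_ne[OF fp]])
  have "e = C p \<or> e = D p"
    using third_triangle_on_edge[OF convex_flip.triangulation[OF fp] convex_flip.abc_in[OF fp]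
      convex_flip.abd_in[OF fp] convex_flip.diagonal_ne[OF fp]] t(1) e by simp
  then show ?thesis unfolding removed_def e by blast
qed

text \<open>The triangle removed by flip \<open>m\<close> and created by flip \<open>i\<close> contains both the new
  diagonal of \<open>i\<close> and the edge of \<open>m\<close>; as it survives until \<open>m\<close>, no flip in between
  has that diagonal as its edge, since that flip would remove it.\<close>
lemma depends_dag_arc:
  assumes len: "length F = n" and F: "\<And>i. i < n \<Longrightarrow> F ! i = {A i, B i}" and dep: "depends i m"
  shows "dag_arc F Ts i m"
proof -
  obtain t where t: "i < m" "m < n" "t \<in> removed m" "t \<in> created i" "survives (Suc i) t m"
    using dep unfolding depends_def by blast
  have diag: "new_diag (Ts ! i) (F ! i) = {C i, D i}"
    using convex_flip.new_diag_eq[OF flip] F t by simp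
  have born: "born (Suc i) t" using t unfolding born_def by simp
  have alive: "t \<in> Ts ! k" if "Suc i \<le> k" "k \<le> m" for k
  proof (rule born_survives_mem[OF born _ that(1)])
    show "survives (Suc i) t k" using t(5) that(2) unfolding survives_def by simp
    show "k \<le> n" using that(2) t(2) by simp
  qed
  have edge_sub: "F ! m \<subseteq> t" using t F unfolding removed_def by auto
  have diag_sub: "{C i, D i} \<subseteq> t" using t unfolding created_def by auto
  have "share_triangle (Ts ! m) {C i, D i} (F ! m)" if "{C i, D i} \<noteq> F ! m"
    unfolding share_triangle_def using that alive[of m] t(1) edge_sub diag_sub
    by (intro conjI bexI[of _ t]) auto
  then have adjacent: "{C i, D i} = F ! m \<or> share_triangle (Ts ! m) {C i, D i} (F ! m)" by blast
  have not_flipped: "F ! p \<noteq> {C i, D i}" if p: "i < p" "p < m" for p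
  proof
    assume "F ! p = {C i, D i}"
    moreover have p_lt: "p < n" using p t by simp
    ultimately have "{A p, B p} \<subseteq> t" using F diag_sub by simp
    then have "t \<in> removed p" using triangle_on_flipped_edge_removed[OF p_lt] alive p by simp
    then show False using t(5) p unfolding survives_def by simp
  qed
  show ?thesis unfolding dag_arc_def diag
  proof (intro conjI)
    show "i < m" "m < length F" using t(1,2) len by simp_all
    show "\<not> (\<exists>p. i < p \<and> p < m \<and> F ! p = {C i, D i})" using not_flipped by blast
  qed (rule adjacent)
qed

end

lemma flip_run_history:
  assumes run: "flip_run P T0 F Ts"
  obtains A B C D where "flip_history P Ts (length F) A B C D"
    and "\<And>i. i < length F \<Longrightarrow> F ! i = {A i, B i}"
proof -
  define flip_at where "flip_at i a b c d \<longleftrightarrow> F ! i = {a, b} \<and> a \<noteq> b \<and> c \<noteq> d \<and>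
    {a, b, c} \<in> Ts ! i \<and> {a, b, d} \<in> Ts ! i \<and> convex_quad a b c d \<and>
    Ts ! (i + 1) = (Ts ! i - {{a, b, c}, {a, b, d}}) \<union> {{a, c, d}, {b, c, d}}" for i a b c d
  have "\<forall>i. \<exists>a b c d. i < length F \<longrightarrow> flip_at i a b c d"
    using run unfolding flip_run_def flip_step_def flip_at_def by metis
  then obtain A B C D where w: "\<And>i. i < length F \<Longrightarrow> flip_at i (A i) (B i) (C i) (D i)"
    by metis
  have "flip_history P Ts (length F) A B C D"
  proof (rule flip_history.intro)
    show "is_triangulation P (Ts ! 0)" using run unfolding flip_run_def by auto
    fix i assume i: "i < length F"
    show "convex_flip P (Ts ! i) (A i) (B i) (C i) (D i)"
      using run w[OF i] i unfolding flip_run_def flip_at_def by unfold_locales simp_all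
    show "Ts ! Suc i = (Ts ! i - {{A i, B i, C i}, {A i, B i, D i}}) \<union> {{A i, C i, D i}, {B i, C i, D i}}"
      using w[OF i] unfolding flip_at_def by simp
  qed
  then show thesis using that w unfolding flip_at_def by blast
qed

theorem lemma1:
  fixes P :: "pt set" and T0 :: "pt set set" and F :: "pt set list"
    and Ts :: "pt set set list" and \<sigma> :: "nat \<Rightarrow> nat"
  assumes "is_triangulation P T0"
    and "flip_run P T0 F Ts"
    and "bij_betw \<sigma> {..<length F} {..<length F}"
    and "\<forall>k < length F. \<forall>l < length F. dag_arc F Ts (\<sigma> k) (\<sigma> l) \<longrightarrow> k < l"
  shows "\<exists>Ts'. flip_run P T0 (map (\<lambda>k. F ! \<sigma> k) [0..<length F]) Ts' \<and> last Ts' = last Ts"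
proof -
  obtain A B C D where hist: "flip_history P Ts (length F) A B C D"
    and F: "\<And>i. i < length F \<Longrightarrow> F ! i = {A i, B i}"
    using flip_run_history[OF assms(2)] by blast
  have order: "l < k" if "k < length F" "l < length F"
    and "flip_history.depends (length F) A B C D (\<sigma> l) (\<sigma> k)" for k l
    using assms(4) flip_history.depends_dag_arc[OF hist refl F] that by blast
  have edges: "map (\<lambda>k. F ! \<sigma> k) [0..<length F] = map (\<lambda>k. {A (\<sigma> k), B (\<sigma> k)}) [0..<length F]"
    using F bij_betwE[OF assms(3)] by (intro map_cong) simp_all
  have T0: "T0 = Ts ! 0" and len: "length Ts = Suc (length F)"
    using assms(2) unfolding flip_run_def by simp_all
  have replay: "flip_run P (Ts ! 0) (map (\<lambda>k. {A (\<sigma> k), B (\<sigma> k)}) [0..<length F])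
      (map (\<lambda>k. flip_history.live Ts (length F) A B C D (\<sigma> ` {..<k})) [0..<Suc (length F)])"
    by (rule flip_history.replay_flip_run[OF hist assms(3)]) (fact order)
  have last: "last Ts = Ts ! length F" using len by (subst last_conv_nth) auto
  have "last (map (\<lambda>k. flip_history.live Ts (length F) A B C D (\<sigma> ` {..<k})) [0..<Suc (length F)])
      = last Ts"
    unfolding last by (rule flip_history.replay_last[OF hist assms(3)]) (fact order)
  then show ?thesis unfolding edges T0 using replay by blast
qed

end
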